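(* Let $w\ge1$ and let $m_1,\dots,m_w$ and $l_1,\dots,l_w$ be positive integers with $m_i\ge 3$ for all $i$ and $l_i\le 3$ for all $i\ge 2$. For an integer $k\ge0$ put \[ L(m,l)=\sum_{\substack{k_1,\dots,k_w\ge0\\ k_1+\dots+k_w=k}}\ \prod_{i=1}^w (k_i+m_i)^{l_i-\frac72}. \] Then for every $\delta>0$ there is a constant $C_\delta$ (depending only on $\delta$) such that for all such data, \[ L(m,l)\le C_\delta^{\sum_i m_i}\,(1+\delta)^k\,(k+m_1)^{l_1-\frac72}. \] *)

theory Defs
  imports Complex_Main
begin

definition compositions :: "nat \<Rightarrow> nat \<Rightarrow> (nat \<Rightarrow> nat) set" where
  "compositions w k = {kk. (\<forall>i. i \<notin> {1..w} \<longrightarrow> kk i = 0) \<and> (\<Sum>i=1..w. kk i) = k}"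

definition Lsum :: "nat \<Rightarrow> (nat \<Rightarrow> nat) \<Rightarrow> (nat \<Rightarrow> nat) \<Rightarrow> nat \<Rightarrow> real" where
  "Lsum w m l k = (\<Sum>kk\<in>compositions w k.
      \<Prod>i=1..w. real (kk i + m i) powr (real (l i) - 7/2))"

end

theory Submission
  imports Defs "HOL-Real_Asymp.Real_Asymp" "HOL-Library.FuncSet"
begin

text \<open>
  Every factor with \<open>i \<ge> 2\<close> has exponent \<open>l\<^sub>i - 7/2 < 0\<close> and base \<open>\<ge> 1\<close>, so it is at most 1,
  and the first factor is at most \<open>(k + m\<^sub>1)\<^bsup>l\<^sub>1 - 7/2\<^esup> (k + m\<^sub>1)\<^sup>3\<close>. Hence \<open>L(m,l)\<close> is bounded
  by the number of compositions of \<open>k\<close> into \<open>w\<close> parts times that expression. Comparing with the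
  generating function \<open>(1 - x)\<^sup>-\<^sup>w\<close> at \<open>x = 1/q\<close>, \<open>q = \<surd>(1 + \<delta>)\<close>, bounds the number of
  compositions by \<open>(q/(q-1))\<^sup>w q\<^sup>k\<close>, and the cube is absorbed by \<open>B q\<^bsup>k + m\<^sub>1\<^esup>\<close>.
  Since \<open>w \<le> \<Sum> m\<^sub>i\<close> and \<open>m\<^sub>1 \<le> \<Sum> m\<^sub>i\<close>, all constants fit into \<open>C\<^bsup>\<Sum> m\<^sub>i\<^esup>\<close>.
\<close>

lemma real_power_le_const_mult_exp:
  fixes q :: real
  assumes "q > 1"
  shows "\<exists>B\<ge>1. \<forall>n::nat. real n ^ d \<le> B * q ^ n"
proof -
  define c where "c = ln q"
  have "c > 0" using assms by (simp add: c_def)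
  have q_power: "q ^ n = exp (c * real n)" for n :: nat
    using assms by (simp add: c_def powr_realpow[symmetric] powr_def mult.commute)
  have "((\<lambda>n::nat. real n ^ d / exp (c * real n)) \<longlongrightarrow> 0) at_top"
    using \<open>c > 0\<close> by real_asymp
  hence "\<forall>\<^sub>F n in at_top. real n ^ d / exp (c * real n) < 1"
    by (rule order_tendstoD) simp
  then obtain N where N: "\<And>n. n \<ge> N \<Longrightarrow> real n ^ d / exp (c * real n) < 1"
    by (auto simp: eventually_at_top_linorder)
  have q_power_ge_1: "1 \<le> q ^ n" for n using assms by simp
  have "real n ^ d \<le> (real N ^ d + 1) * q ^ n" for n
  proof (cases "n \<ge> N")
    case True
    then have "real n ^ d \<le> q ^ n" using N[OF True] by (simp add: q_power field_simps)
    also have "\<dots> \<le> (real N ^ d + 1) * q ^ n"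
      using q_power_ge_1[of n] by (simp add: algebra_simps)
    finally show ?thesis .
  next
    case False
    then have "real n ^ d \<le> real N ^ d" by (simp add: power_mono)
    also have "\<dots> \<le> (real N ^ d + 1) * q ^ n"
      using q_power_ge_1[of n] mult_left_mono[OF q_power_ge_1[of n], of "real N ^ d"]
      by (simp add: algebra_simps)
    finally show ?thesis .
  qed
  then show ?thesis by (intro exI[of _ "real N ^ d + 1"]) auto
qed

lemma sum_power_atLeastAtMost_le:
  fixes x :: real
  assumes "0 \<le> x" "x < 1"
  shows "(\<Sum>j=0..k. x ^ j) \<le> 1 / (1 - x)"
proof -
  have "(\<Sum>j=0..k. x ^ j) = (\<Sum>j<Suc k. x ^ j)"
    by (rule sum.cong) auto
  also have "\<dots> = (1 - x ^ Suc k) / (1 - x)"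
    using assms by (subst sum_gp_strict) auto
  also have "\<dots> \<le> 1 / (1 - x)" using assms by (intro divide_right_mono) auto
  finally show ?thesis .
qed

lemma compositions_part_le:
  assumes "kk \<in> compositions w k"
  shows "kk i \<le> k"
proof (cases "i \<in> {1..w}")
  case True
  then have "kk i \<le> (\<Sum>i=1..w. kk i)" by (intro member_le_sum) auto
  with assms show ?thesis by (simp add: compositions_def)
qed (use assms in \<open>simp add: compositions_def\<close>)

lemma inj_on_restrict_compositions:
  "inj_on (\<lambda>kk. restrict kk {1..w}) (compositions w k)"
proof (rule inj_onI, rule ext)
  fix a b i
  assume "a \<in> compositions w k" "b \<in> compositions w k"
    and "restrict a {1..w} = restrict b {1..w}"
  then show "a i = b i"
    by (cases "i \<in> {1..w}") (auto simp: compositions_def dest: fun_cong[of _ _ i])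
qed

lemma restrict_compositions_subset:
  "(\<lambda>kk. restrict kk {1..w}) ` compositions w k \<subseteq> PiE {1..w} (\<lambda>_. {0..k})"
  by (auto dest: compositions_part_le)

text \<open>Each composition contributes the monomial \<open>x\<^sup>k\<close> to the expansion of \<open>(\<Sum>\<^sub>j\<^sub>\<le>\<^sub>k x\<^sup>j)\<^sup>w\<close>.\<close>

lemma card_compositions_mult_power_le:
  fixes x :: real
  assumes "0 \<le> x" "x < 1"
  shows "real (card (compositions w k)) * x ^ k \<le> (1 / (1 - x)) ^ w"
proof -
  let ?g = "\<lambda>kk. restrict kk {1..w}" and ?P = "PiE {1..w} (\<lambda>_. {0..k})"
  have "real (card (compositions w k)) * x ^ k
      = (\<Sum>kk\<in>compositions w k. \<Prod>i=1..w. x ^ kk i)"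
    by (simp add: compositions_def power_sum[symmetric])
  also have "\<dots> = (\<Sum>h\<in>?g ` compositions w k. \<Prod>i=1..w. x ^ h i)"
    by (subst sum.reindex[OF inj_on_restrict_compositions]) (auto intro!: sum.cong prod.cong)
  also have "\<dots> \<le> (\<Sum>h\<in>?P. \<Prod>i=1..w. x ^ h i)"
    using assms by (intro sum_mono2 restrict_compositions_subset) (auto simp: prod_nonneg finite_PiE)
  also have "\<dots> = (\<Prod>i=1..w. \<Sum>j=0..k. x ^ j)"
    by (rule prod_sum_PiE[symmetric]) auto
  also have "\<dots> \<le> (\<Prod>i=1..w. 1 / (1 - x))"
    using assms by (intro prod_mono conjI sum_power_atLeastAtMost_le sum_nonneg) auto
  finally show ?thesis by simp
qed

lemma card_compositions_le:
  fixes q :: real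
  assumes "q > 1"
  shows "real (card (compositions w k)) \<le> (q / (q - 1)) ^ w * q ^ k"
proof -
  have "real (card (compositions w k)) * (1 / q) ^ k \<le> (1 / (1 - 1 / q)) ^ w"
    using assms by (intro card_compositions_mult_power_le) auto
  also have "1 / (1 - 1 / q) = q / (q - 1)" using assms by (simp add: field_simps)
  finally show ?thesis using assms by (simp add: power_one_over field_simps)
qed

lemma powr_le_powr_mult_cube:
  fixes x y a :: real
  assumes "1 \<le> x" "x \<le> y" "a \<ge> -5/2"
  shows "x powr a \<le> y powr a * y ^ 3"
proof -
  have "x powr a \<le> y powr (a + 5/2)"
  proof (cases "a \<ge> 0")
    case True
    then have "x powr a \<le> y powr a" using assms by (intro powr_mono2) auto
    also have "\<dots> \<le> y powr (a + 5/2)" using assms by (intro powr_mono) auto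
    finally show ?thesis .
  next
    case False
    then have "x powr a \<le> x powr 0" using assms by (intro powr_mono) auto
    also have "\<dots> = y powr 0" using assms by simp
    also have "\<dots> \<le> y powr (a + 5/2)" using assms by (intro powr_mono) auto
    finally show ?thesis .
  qed
  also have "\<dots> = y powr a * y powr (5/2)" using assms by (simp add: powr_add)
  also have "\<dots> \<le> y powr a * y powr 3" using assms by (intro mult_left_mono powr_mono) auto
  finally show ?thesis using assms by (simp add: powr_realpow)
qed

lemma prod_powr_le_first_factor:
  fixes x e :: "nat \<Rightarrow> real"
  assumes "1 \<le> w" and "\<And>i. i \<in> {2..w} \<Longrightarrow> 1 \<le> x i \<and> e i \<le> 0"
  shows "(\<Prod>i=1..w. x i powr e i) \<le> x 1 powr e 1"
proof -
  have "(\<Prod>i=1..w. x i powr e i) = x 1 powr e 1 * (\<Prod>i=2..w. x i powr e i)"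
    using assms(1) by (simp add: prod.atLeast_Suc_atMost numeral_2_eq_2)
  also have "\<dots> \<le> x 1 powr e 1 * 1"
  proof (intro mult_left_mono prod_le_1 conjI)
    fix i assume "i \<in> {2..w}"
    with assms(2) have "1 \<le> x i" "e i \<le> 0" by auto
    then have "x i powr e i \<le> x i powr 0" by (intro powr_mono) auto
    with \<open>1 \<le> x i\<close> show "x i powr e i \<le> 1" by simp
  qed auto
  finally show ?thesis by simp
qed

lemma Lsum_le_card_compositions:
  assumes "1 \<le> w" "1 \<le> m 1" "1 \<le> l 1" and "\<And>i. i \<in> {2..w} \<Longrightarrow> 1 \<le> m i \<and> l i \<le> 3"
  shows "Lsum w m l k \<le> real (card (compositions w k))
           * (real (k + m 1) powr (real (l 1) - 7/2) * real (k + m 1) ^ 3)"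
  unfolding Lsum_def
proof (rule sum_bounded_above)
  fix kk assume kk: "kk \<in> compositions w k"
  have "(\<Prod>i=1..w. real (kk i + m i) powr (real (l i) - 7/2))
      \<le> real (kk 1 + m 1) powr (real (l 1) - 7/2)"
  proof (rule prod_powr_le_first_factor)
    fix i assume "i \<in> {2..w}"
    with assms(4) have "1 \<le> m i" "l i \<le> 3" by auto
    then show "1 \<le> real (kk i + m i) \<and> real (l i) - 7/2 \<le> 0" by simp
  qed (use assms in auto)
  also have "\<dots> \<le> real (k + m 1) powr (real (l 1) - 7/2) * real (k + m 1) ^ 3"
    using assms compositions_part_le[OF kk, of 1] by (intro powr_le_powr_mult_cube) auto
  finally show "(\<Prod>i=1..w. real (kk i + m i) powr (real (l i) - 7/2))
      \<le> real (k + m 1) powr (real (l 1) - 7/2) * real (k + m 1) ^ 3" .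
qed

lemma mult_power_le_power:
  fixes E B q :: real
  assumes "1 \<le> E" "1 \<le> B" "1 \<le> q" "w \<le> M" "n \<le> M" "1 \<le> M"
  shows "E ^ w * B * q ^ n \<le> (E * B * q) ^ M"
proof -
  have "E ^ w * B ^ 1 * q ^ n \<le> E ^ M * B ^ M * q ^ M"
    using assms by (intro mult_mono power_increasing) auto
  then show ?thesis by (simp add: power_mult_distrib)
qed

theorem proposition4p18:
  fixes \<delta> :: real
  assumes "\<delta> > 0"
  shows "\<exists>C>0. \<forall>w m l k. w \<ge> 1 \<and> (\<forall>i\<in>{1..w}. m i \<ge> 3 \<and> l i \<ge> 1)
            \<and> (\<forall>i\<in>{2..w}. l i \<le> 3) \<longrightarrow>
           Lsum w m l k \<le> C ^ (\<Sum>i=1..w. m i) * (1 + \<delta>) ^ k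
                            * real (k + m 1) powr (real (l 1) - 7/2)"
proof -
  define q where "q = sqrt (1 + \<delta>)"
  have "q > 1" and q_square: "q\<^sup>2 = 1 + \<delta>" using assms by (simp_all add: q_def)
  then obtain B where "B \<ge> 1" and B: "\<And>n::nat. real n ^ 3 \<le> B * q ^ n"
    using real_power_le_const_mult_exp by blast
  define E where "E = q / (q - 1)"
  have "E \<ge> 1" using \<open>q > 1\<close> by (simp add: E_def)
  show ?thesis
  proof (intro exI[of _ "E * B * q"] conjI allI impI)
    show "E * B * q > 0" using \<open>E \<ge> 1\<close> \<open>B \<ge> 1\<close> \<open>q > 1\<close> by simp
    fix w k :: nat and m l :: "nat \<Rightarrow> nat"
    assume "w \<ge> 1 \<and> (\<forall>i\<in>{1..w}. m i \<ge> 3 \<and> l i \<ge> 1) \<and> (\<forall>i\<in>{2..w}. l i \<le> 3)"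
    then have "1 \<le> w" and m_l: "\<And>i. i \<in> {1..w} \<Longrightarrow> 3 \<le> m i \<and> 1 \<le> l i"
      and l_le: "\<And>i. i \<in> {2..w} \<Longrightarrow> l i \<le> 3" by auto
    have m_pos: "1 \<le> m i" if "i \<in> {1..w}" for i using m_l[OF that] by linarith
    let ?M = "\<Sum>i=1..w. m i" and ?y = "real (k + m 1)" and ?a = "real (l 1) - 7/2"
    have "w = (\<Sum>i=1..w. 1)" by simp
    also have "\<dots> \<le> ?M" using m_pos by (intro sum_mono)
    finally have "w \<le> ?M" .
    have "m 1 \<le> ?M" using \<open>1 \<le> w\<close> by (intro member_le_sum) auto
    have "Lsum w m l k \<le> real (card (compositions w k)) * (?y powr ?a * ?y ^ 3)"
      using \<open>1 \<le> w\<close> m_pos m_l l_le by (intro Lsum_le_card_compositions) auto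
    also have "\<dots> \<le> (E ^ w * q ^ k) * (?y powr ?a * (B * q ^ (k + m 1)))"
      using \<open>q > 1\<close> B[of "k + m 1"]
      by (intro mult_mono mult_left_mono) (auto simp: E_def card_compositions_le)
    also have "\<dots> = E ^ w * B * q ^ m 1 * (q\<^sup>2) ^ k * ?y powr ?a"
      by (simp add: power_add power_mult_distrib power2_eq_square algebra_simps)
    also have "\<dots> \<le> (E * B * q) ^ ?M * (1 + \<delta>) ^ k * ?y powr ?a"
      unfolding q_square using assms \<open>w \<le> ?M\<close> \<open>m 1 \<le> ?M\<close> \<open>E \<ge> 1\<close> \<open>B \<ge> 1\<close> \<open>q > 1\<close> \<open>1 \<le> w\<close>
      by (intro mult_right_mono mult_power_le_power) auto
    finally show "Lsum w m l k \<le> (E * B * q) ^ ?M * (1 + \<delta>) ^ k * ?y powr ?a" .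
  qed
qed

end
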